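(* Let $A\in\mathbb{R}^{n^2\times n^2}$ be PS-symmetric and define $\tilde A\in\mathbb{R}^{n^2\times n^2}$ by $\tilde A(i_2+(j_2-1)n,\,i_1+(j_1-1)n)=A(i_1+(i_2-1)n,\,j_1+(j_2-1)n)$ for $1\le i_1,i_2,j_1,j_2\le n$. Then $\tilde A$ is PS-symmetric. Consequently there exist real scalars $\lambda^{(\mathrm{sym})}_1,\dots,\lambda^{(\mathrm{sym})}_{n(n+1)/2}$, $\lambda^{(\mathrm{skew})}_1,\dots,\lambda^{(\mathrm{skew})}_{n(n-1)/2}$, symmetric matrices $B^{(\mathrm{sym})}_i\in\mathbb{R}^{n\times n}$ and skew-symmetric matrices $B^{(\mathrm{skew})}_i\in\mathbb{R}^{n\times n}$, whose vecs together form an orthonormal basis of $\mathbb{R}^{n^2}$, such that $$A=\sum_{i=1}^{n(n+1)/2}\lambda^{(\mathrm{sym})}_i\,B^{(\mathrm{sym})}_i\otimes B^{(\mathrm{sym})}_i+\sum_{i=1}^{n(n-1)/2}\lambda^{(\mathrm{skew})}_i\,B^{(\mathrm{skew})}_i\otimes B^{(\mathrm{skew})}_i.$$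
   Context: $\Pi_{nn}=I_{n^2}(:,p)$ with $p=[1{:}n{:}n^2,\;2{:}n{:}n^2,\;\dots,\;n{:}n{:}n^2]$ (MATLAB colon notation), equivalently $\Pi_{nn}(e_i\otimes e_j)=e_j\otimes e_i$ for the standard basis $e_1,\dots,e_n$ of $\mathbb{R}^n$. A matrix $M\in\mathbb{R}^{n^2\times n^2}$ is PS-symmetric if $M=M^T$ and $M=\Pi_{nn}M\Pi_{nn}$. $\otimes$ is the Kronecker product and $\mathrm{vec}$ stacks columns. *)

theory Defs
  imports "Jordan_Normal_Form.Matrix"
begin

text \<open>All indices are 0-based.  An index of R^(n^2) is written as a + b*n with a,b < n.\<close>

text \<open>The perfect-shuffle permutation Pi_nn: Pi (e_i tensor e_j) = e_j tensor e_i,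
  where e_i tensor e_j is the standard basis vector with index i*n + j.\<close>
definition PS_perm :: "nat \<Rightarrow> real mat" where
  "PS_perm n = mat (n^2) (n^2) (\<lambda>(r, c). if r = (c mod n) * n + c div n then 1 else 0)"

definition PS_symmetric :: "nat \<Rightarrow> real mat \<Rightarrow> bool" where
  "PS_symmetric n M \<longleftrightarrow> M \<in> carrier_mat (n^2) (n^2) \<and> M = M\<^sup>T \<and> M = PS_perm n * M * PS_perm n"

definition kron :: "real mat \<Rightarrow> real mat \<Rightarrow> real mat" where
  "kron B C = mat (dim_row B * dim_row C) (dim_col B * dim_col C)
     (\<lambda>(i, j). B $$ (i div dim_row C, j div dim_col C) * C $$ (i mod dim_row C, j mod dim_col C))"

definition vec_of_mat :: "real mat \<Rightarrow> real vec" where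
  "vec_of_mat B = vec (dim_row B * dim_col B) (\<lambda>k. B $$ (k mod dim_row B, k div dim_row B))"

definition tilde :: "nat \<Rightarrow> real mat \<Rightarrow> real mat" where
  "tilde n A = mat (n^2) (n^2)
     (\<lambda>(r, c). A $$ (c mod n + (r mod n) * n, c div n + (r div n) * n))"

definition orthonormal_basis_family :: "nat \<Rightarrow> (nat \<Rightarrow> real vec) \<Rightarrow> bool" where
  "orthonormal_basis_family N V \<longleftrightarrow>
     (\<forall>k<N. V k \<in> carrier_vec N) \<and>
     (\<forall>k<N. \<forall>l<N. V k \<bullet> V l = (if k = l then 1 else 0)) \<and>
     (\<forall>v \<in> carrier_vec N. \<exists>c :: nat \<Rightarrow> real. \<forall>r<N. v $ r = (\<Sum>k<N. c k * V k $ r))"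

end

theory Submission
  imports Defs "HOL-Analysis.Function_Topology"
begin

text \<open>The index map \<open>(i\<^sub>1 + i\<^sub>2 n, j\<^sub>1 + j\<^sub>2 n) \<mapsto> (i\<^sub>2 + j\<^sub>2 n, i\<^sub>1 + j\<^sub>1 n)\<close> defining
  \<open>tilde n A\<close> exchanges the two symmetries of a PS-symmetric matrix (transposition and
  conjugation by \<open>\<Pi>\<close>), so \<open>tilde n A\<close> is again PS-symmetric.  It is therefore a symmetric
  operator on \<open>\<real>^(n\<^sup>2)\<close> commuting with the involution \<open>\<Pi>\<close>, and has an orthonormal eigenbasis
  of \<open>\<Pi>\<close>-even and \<open>\<Pi>\<close>-odd vectors, i.e. of vecs of symmetric and skew-symmetric matrices
  \<open>B\<^sub>k\<close>.  Undoing the index map turns \<open>tilde n A = \<Sum> \<lambda>\<^sub>k vec B\<^sub>k (vec B\<^sub>k)\<^sup>T\<close> into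
  \<open>A = \<Sum> \<lambda>\<^sub>k B\<^sub>k \<otimes> B\<^sub>k\<close>.  The eigenvectors are found one at a time by maximizing the Rayleigh
  quotient over the (compact) set of unit vectors of fixed parity orthogonal to those already
  found, which avoids complex eigenvalues altogether.  The numbers \<open>p\<close>, \<open>q\<close> of even and odd
  basis vectors satisfy \<open>p + q = n\<^sup>2\<close> and \<open>p - q = trace \<Pi> = n\<close>.\<close>

definition dot :: "nat \<Rightarrow> (nat \<Rightarrow> real) \<Rightarrow> (nat \<Rightarrow> real) \<Rightarrow> real" where
  "dot N x y = (\<Sum>i<N. x i * y i)"

definition mat_app :: "nat \<Rightarrow> (nat \<Rightarrow> nat \<Rightarrow> real) \<Rightarrow> (nat \<Rightarrow> real) \<Rightarrow> nat \<Rightarrow> real" where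
  "mat_app N T x = (\<lambda>i. \<Sum>j<N. T i j * x j)"

lemma dot_commute: "dot N x y = dot N y x"
  unfolding dot_def by (simp add: mult.commute)

lemma dot_add_left: "dot N (\<lambda>i. a i + b i) c = dot N a c + dot N b c"
  unfolding dot_def by (simp add: distrib_right sum.distrib)

lemma dot_diff_left: "dot N (\<lambda>i. a i - b i) c = dot N a c - dot N b c"
  unfolding dot_def by (simp add: left_diff_distrib sum_subtractf)

lemma dot_scale_left: "dot N (\<lambda>i. t * a i) c = t * dot N a c"
  unfolding dot_def by (simp add: sum_distrib_left mult.assoc)

lemma dot_add_right: "dot N c (\<lambda>i. a i + b i) = dot N c a + dot N c b"
  unfolding dot_def by (simp add: distrib_left sum.distrib)

lemma dot_diff_right: "dot N c (\<lambda>i. a i - b i) = dot N c a - dot N c b"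
  unfolding dot_def by (simp add: right_diff_distrib sum_subtractf)

lemma dot_scale_right: "dot N c (\<lambda>i. t * a i) = t * dot N c a"
  unfolding dot_def by (simp add: sum_distrib_left mult.left_commute)

lemma dot_sum_left: "dot N (\<lambda>j. \<Sum>k<m. c k * v k j) w = (\<Sum>k<m. c k * dot N (v k) w)"
  unfolding dot_def by (simp add: sum_distrib_right sum_distrib_left mult.assoc, rule sum.swap)

lemma dot_sum_right: "dot N w (\<lambda>j. \<Sum>k<m. c k * v k j) = (\<Sum>k<m. c k * dot N w (v k))"
  using dot_sum_left[of N c v m w] by (simp add: dot_commute[of N w])

lemma dot_cong:
  "(\<And>i. i < N \<Longrightarrow> x i = x' i) \<Longrightarrow> (\<And>i. i < N \<Longrightarrow> y i = y' i) \<Longrightarrow> dot N x y = dot N x' y'"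
  unfolding dot_def by (rule sum.cong) auto

lemma dot_self_nonneg: "dot N x x \<ge> 0"
  unfolding dot_def by (intro sum_nonneg) auto

lemma dot_self_eq_0: "dot N x x = 0 \<Longrightarrow> i < N \<Longrightarrow> x i = 0"
  unfolding dot_def by (subst (asm) sum_nonneg_eq_0_iff) auto

lemma sum_delta_mult:
  fixes N :: nat assumes "i < N" shows "(\<Sum>j<N. (if j = i then 1 else 0) * f j) = (f i :: real)"
proof -
  have "(\<Sum>j<N. (if j = i then 1 else 0) * f j) = (\<Sum>j<N. if j = i then f j else 0)"
    by (rule sum.cong) auto
  also have "\<dots> = f i" using assms by (subst sum.delta) auto
  finally show ?thesis .
qed

lemma dot_unit_left: "i < N \<Longrightarrow> dot N (\<lambda>j. if j = i then 1 else 0) x = x i"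
  unfolding dot_def by (rule sum_delta_mult)

lemma mat_app_add_scale: "mat_app N T (\<lambda>i. a i + t * b i) = (\<lambda>i. mat_app N T a i + t * mat_app N T b i)"
  unfolding mat_app_def by (auto simp: distrib_left sum.distrib sum_distrib_left mult.left_commute)

lemma mat_app_scale: "mat_app N T (\<lambda>i. t * a i) = (\<lambda>i. t * mat_app N T a i)"
  unfolding mat_app_def by (auto simp: sum_distrib_left mult.left_commute)

lemma mat_app_cong: "(\<And>i. i < N \<Longrightarrow> x i = x' i) \<Longrightarrow> mat_app N T x = mat_app N T x'"
  unfolding mat_app_def by (rule ext, rule sum.cong) auto

lemma mat_app_sum: "mat_app N T (\<lambda>j. \<Sum>k<m. c k * v k j) i = (\<Sum>k<m. c k * mat_app N T (v k) i)"
  unfolding mat_app_def by (simp add: sum_distrib_left mult.left_commute, rule sum.swap)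

lemma sum_lessThan_add: "(\<Sum>k<p + (q::nat). f k) = (\<Sum>k<p. f k) + (\<Sum>k<q. f (p + k))"
  by (induction q) (auto simp: add.assoc)

text \<open>Bessel's inequality for each unit coordinate vector gives \<open>\<Sum>\<^sub>k v\<^sub>k(i)\<^sup>2 \<le> 1\<close>; summing over
  the \<open>N\<close> coordinates gives \<open>m = \<Sum>\<^sub>k |v\<^sub>k|\<^sup>2 \<le> N\<close>.\<close>
lemma orthonormal_family_length_le:
  assumes orthonormal: "\<And>k l. k < m \<Longrightarrow> l < m \<Longrightarrow> dot N (v k) (v l) = (if k = l then 1 else 0)"
  shows "m \<le> N"
proof -
  have coord: "(\<Sum>k<m. (v k i)\<^sup>2) \<le> 1" if i: "i < N" for i
  proof -
    define e where "e = (\<lambda>j. if j = i then 1 else 0 :: real)"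
    define s where "s = (\<lambda>j. \<Sum>k<m. v k i * v k j)"
    have ev: "dot N e (v k) = v k i" for k
      unfolding e_def using dot_unit_left[OF i] .
    have sv: "dot N s (v l) = v l i" if "l < m" for l
    proof -
      have "dot N s (v l) = (\<Sum>k<m. (if k = l then 1 else 0) * v k i)"
        unfolding s_def dot_sum_left by (rule sum.cong) (auto simp: orthonormal that)
      also have "\<dots> = v l i" using that by (rule sum_delta_mult)
      finally show ?thesis .
    qed
    have es: "dot N e s = (\<Sum>k<m. (v k i)\<^sup>2)"
      unfolding s_def dot_sum_right ev by (simp add: power2_eq_square)
    have ss: "dot N s s = (\<Sum>k<m. (v k i)\<^sup>2)"
      by (subst (2) s_def, unfold dot_sum_right) (rule sum.cong, auto simp: sv power2_eq_square)
    have "0 \<le> dot N (\<lambda>j. e j - s j) (\<lambda>j. e j - s j)" by (rule dot_self_nonneg)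
    also have "\<dots> = dot N e e - 2 * dot N e s + dot N s s"
      unfolding dot_diff_left dot_diff_right by (simp add: dot_commute[of N s e])
    finally show ?thesis
      using dot_unit_left[OF i, of e] unfolding es ss by (simp add: e_def)
  qed
  have "real m = (\<Sum>k<m. dot N (v k) (v k))" by (simp add: orthonormal)
  also have "\<dots> = (\<Sum>i<N. \<Sum>k<m. (v k i)\<^sup>2)"
    unfolding dot_def by (subst sum.swap) (simp add: power2_eq_square)
  also have "\<dots> \<le> (\<Sum>i<N. 1)" by (rule sum_mono) (simp add: coord)
  finally show ?thesis by simp
qed

lemma linear_coeff_eq_0_if_quadratic_nonpos:
  fixes b c :: real
  assumes "\<And>t. 2 * t * b + t\<^sup>2 * c \<le> 0"
  shows "b = 0"
proof (rule ccontr)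
  assume "b \<noteq> 0"
  define t where "t = b / (c\<^sup>2 + 1)"
  have "c\<^sup>2 + 1 > 0" by (smt (verit) zero_le_power2)
  hence "t \<noteq> 0" using \<open>b \<noteq> 0\<close> by (simp add: t_def)
  have "b = t * (c\<^sup>2 + 1)" using \<open>c\<^sup>2 + 1 > 0\<close> by (simp add: t_def)
  hence "2 * t * b + t\<^sup>2 * c = t\<^sup>2 * (2 * (c + 1/4)\<^sup>2 + 15/8)"
    by (simp add: power2_eq_square algebra_simps)
  also have "\<dots> > 0" using \<open>t \<noteq> 0\<close> by (intro mult_pos_pos) (auto intro: add_nonneg_pos)
  finally show False using assms[of t] by simp
qed

lemma continuous_attains_max_on_cube_level_set:
  fixes g f :: "(nat \<Rightarrow> real) \<Rightarrow> real" and N :: nat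
  defines "X \<equiv> powertop_real {..<N}"
    and "Q \<equiv> PiE {..<N} (\<lambda>_. {-1..1})"
  assumes g: "continuous_map X euclideanreal g" and f: "continuous_map X euclideanreal f"
    and x0: "x0 \<in> Q" "g x0 = 0"
  shows "\<exists>x\<in>Q. g x = 0 \<and> (\<forall>y\<in>Q. g y = 0 \<longrightarrow> f y \<le> f x)"
proof -
  let ?K = "{x \<in> topspace X. g x \<in> {0}} \<inter> Q"
  have "compactin X Q" unfolding X_def Q_def by (simp add: compactin_PiE)
  moreover have "closedin X {x \<in> topspace X. g x \<in> {0}}"
    by (rule closedin_continuous_map_preimage[OF g]) simp
  ultimately have "compactin X ?K" by (rule closed_Int_compactin[rotated])
  hence "compact (f ` ?K)" using image_compactin[OF _ f] by simp
  have Q: "Q \<subseteq> topspace X" unfolding X_def Q_def by (auto simp: PiE_def Pi_def)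
  hence "f ` ?K \<noteq> {}" using x0 by blast
  from compact_attains_sup[OF \<open>compact (f ` ?K)\<close> this] obtain x where "x \<in> ?K" "\<forall>y\<in>?K. f y \<le> f x"
    by blast
  thus ?thesis using Q by auto
qed

lemma unit_restrict_in_cube:
  assumes "dot N z z = 1"
  shows "restrict z {..<N} \<in> PiE {..<N} (\<lambda>_. {-1..1})"
proof -
  have "\<bar>z i\<bar> \<le> 1" if "i < N" for i
  proof -
    have "(z i)\<^sup>2 \<le> dot N z z"
      unfolding dot_def power2_eq_square using that by (intro member_le_sum) auto
    thus ?thesis using assms by (simp add: abs_square_le_1)
  qed
  thus ?thesis by (auto simp: PiE_def Pi_def abs_le_iff)
qed

locale symmetric_kernel =
  fixes N :: nat and T :: "nat \<Rightarrow> nat \<Rightarrow> real"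
  assumes symmetric: "\<And>i j. i < N \<Longrightarrow> j < N \<Longrightarrow> T i j = T j i"
begin

definition qform :: "(nat \<Rightarrow> real) \<Rightarrow> real" where
  "qform x = dot N x (mat_app N T x)"

lemma dot_mat_app_swap: "dot N (mat_app N T x) y = dot N x (mat_app N T y)"
proof -
  have "dot N (mat_app N T x) y = (\<Sum>i<N. \<Sum>j<N. T i j * x j * y i)"
    unfolding dot_def mat_app_def by (simp add: sum_distrib_right)
  also have "\<dots> = (\<Sum>j<N. \<Sum>i<N. x j * (T j i * y i))"
    by (subst sum.swap) (intro sum.cong refl, simp add: symmetric mult_ac)
  also have "\<dots> = dot N x (mat_app N T y)"
    unfolding dot_def mat_app_def by (simp add: sum_distrib_left)
  finally show ?thesis .
qed

lemma qform_scale: "qform (\<lambda>i. t * z i) = t\<^sup>2 * qform z"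
  unfolding qform_def mat_app_scale dot_scale_left dot_scale_right by (simp add: power2_eq_square)

lemma qform_cong: "(\<And>i. i < N \<Longrightarrow> z' i = z i) \<Longrightarrow> qform z' = qform z"
  unfolding qform_def by (intro dot_cong) (auto simp: mat_app_cong[of N z' z])

text \<open>Lagrange multipliers without calculus: for \<open>y = T u - \<lambda> u\<close>, which is orthogonal to \<open>u\<close>,
  the maximality inequality at \<open>u + t y\<close> reads \<open>2 t |y|\<^sup>2 + O(t\<^sup>2) \<le> 0\<close> for all \<open>t\<close>.\<close>
lemma rayleigh_maximizer_is_eigenvector:
  assumes S_lincomb: "\<And>a b t. S a \<Longrightarrow> S b \<Longrightarrow> S (\<lambda>i. a i + t * b i)"
    and S_mat_app: "\<And>z. S z \<Longrightarrow> S (mat_app N T z)"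
    and u: "S u" "dot N u u = 1"
    and max: "\<And>z. S z \<Longrightarrow> qform z \<le> qform u * dot N z z"
  shows "\<forall>i<N. mat_app N T u i = qform u * u i"
proof -
  define lam where "lam = qform u"
  define y where "y = (\<lambda>i. mat_app N T u i - lam * u i)"
  have Sy: "S y" using S_lincomb[OF S_mat_app[OF u(1)] u(1), of "-lam"] by (simp add: y_def)
  have yu: "dot N y u = 0"
    unfolding y_def dot_diff_left dot_scale_left using u(2)
    by (simp add: lam_def qform_def dot_mat_app_swap dot_commute)
  define b where "b = dot N y (mat_app N T u)"
  have "2 * t * b + t\<^sup>2 * (qform y - lam * dot N y y) \<le> 0" for t
  proof -
    have "qform (\<lambda>i. u i + t * y i) \<le> lam * dot N (\<lambda>i. u i + t * y i) (\<lambda>i. u i + t * y i)"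
      unfolding lam_def by (rule max[OF S_lincomb[OF u(1) Sy]])
    moreover have "qform (\<lambda>i. u i + t * y i) = lam + 2 * t * b + t\<^sup>2 * qform y"
      unfolding qform_def mat_app_add_scale dot_add_left dot_add_right dot_scale_left dot_scale_right
      by (simp add: lam_def qform_def b_def dot_mat_app_swap[of y u]
          dot_commute[of N u "mat_app N T y"] power2_eq_square algebra_simps)
    moreover have "dot N (\<lambda>i. u i + t * y i) (\<lambda>i. u i + t * y i) = 1 + t\<^sup>2 * dot N y y"
      unfolding dot_add_left dot_add_right dot_scale_left dot_scale_right
      using u(2) yu by (simp add: dot_commute[of N u y] power2_eq_square)
    ultimately show ?thesis by (simp add: algebra_simps)
  qed
  hence "b = 0" by (rule linear_coeff_eq_0_if_quadratic_nonpos)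
  moreover have "dot N y y = b"
    using yu by (subst (1) y_def) (simp add: dot_diff_left dot_scale_left b_def dot_commute)
  ultimately have "dot N y y = 0" by simp
  thus ?thesis using dot_self_eq_0[of N y] by (simp add: y_def lam_def)
qed

end

locale involution_kernel = symmetric_kernel +
  fixes \<sigma> :: "nat \<Rightarrow> nat"
  assumes involution_less: "\<And>i. i < N \<Longrightarrow> \<sigma> i < N"
    and involution: "\<And>i. i < N \<Longrightarrow> \<sigma> (\<sigma> i) = i"
    and kernel_invariant: "\<And>i j. i < N \<Longrightarrow> j < N \<Longrightarrow> T (\<sigma> i) (\<sigma> j) = T i j"
begin

definition parity :: "real \<Rightarrow> (nat \<Rightarrow> real) \<Rightarrow> bool" where
  "parity \<epsilon> x \<longleftrightarrow> (\<forall>i<N. x (\<sigma> i) = \<epsilon> * x i)"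

definition is_eigenpair :: "(nat \<Rightarrow> real) \<times> real \<Rightarrow> bool" where
  "is_eigenpair p \<longleftrightarrow> (\<forall>i<N. mat_app N T (fst p) i = snd p * fst p i)"

definition admissible :: "real \<Rightarrow> ((nat \<Rightarrow> real) \<times> real) list \<Rightarrow> (nat \<Rightarrow> real) \<Rightarrow> bool" where
  "admissible \<epsilon> L z \<longleftrightarrow> parity \<epsilon> z \<and> (\<forall>p\<in>set L. dot N z (fst p) = 0)"

lemma sum_reindex_involution: "(\<Sum>i<N. f (\<sigma> i)) = (\<Sum>i<N. f i)"
proof -
  have "bij_betw \<sigma> {..<N} {..<N}"
    by (rule bij_betw_byWitness[where f' = \<sigma>]) (auto simp: involution involution_less)
  thus ?thesis using sum.reindex_bij_betw by blast
qed

lemma dot_involution: "dot N (\<lambda>i. x (\<sigma> i)) y = dot N x (\<lambda>i. y (\<sigma> i))"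
proof -
  have "dot N (\<lambda>i. x (\<sigma> i)) y = (\<Sum>i<N. x (\<sigma> i) * y (\<sigma> (\<sigma> i)))"
    unfolding dot_def by (intro sum.cong refl) (simp add: involution)
  also have "\<dots> = dot N x (\<lambda>i. y (\<sigma> i))"
    unfolding dot_def by (rule sum_reindex_involution)
  finally show ?thesis .
qed

lemma dot_involution_parity:
  assumes "parity \<epsilon> y" shows "dot N (\<lambda>i. x (\<sigma> i)) y = \<epsilon> * dot N x y"
proof -
  have "dot N x (\<lambda>i. y (\<sigma> i)) = dot N x (\<lambda>i. \<epsilon> * y i)"
    by (rule dot_cong) (use assms in \<open>auto simp: parity_def\<close>)
  thus ?thesis by (simp add: dot_involution dot_scale_right)
qed

lemma dot_parity_opposite:
  assumes "parity 1 x" "parity (-1) y" shows "dot N x y = 0"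
proof -
  have "dot N x y = dot N (\<lambda>i. x (\<sigma> i)) y"
    by (rule dot_cong) (use assms(1) in \<open>auto simp: parity_def\<close>)
  also have "\<dots> = - dot N x y" using dot_involution_parity[OF assms(2)] by simp
  finally show ?thesis by simp
qed

lemma parity_mat_app: assumes "parity \<epsilon> x" shows "parity \<epsilon> (mat_app N T x)"
  unfolding parity_def
proof (intro allI impI)
  fix i assume i: "i < N"
  have "mat_app N T x (\<sigma> i) = (\<Sum>j<N. T (\<sigma> i) (\<sigma> j) * x (\<sigma> j))"
    unfolding mat_app_def by (rule sum_reindex_involution[symmetric])
  also have "\<dots> = (\<Sum>j<N. \<epsilon> * (T i j * x j))"
    by (intro sum.cong refl) (use assms i in \<open>auto simp: parity_def kernel_invariant mult_ac\<close>)
  also have "\<dots> = \<epsilon> * mat_app N T x i" unfolding mat_app_def by (simp add: sum_distrib_left)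
  finally show "mat_app N T x (\<sigma> i) = \<epsilon> * mat_app N T x i" .
qed

lemma admissible_lincomb:
  "admissible \<epsilon> L a \<Longrightarrow> admissible \<epsilon> L b \<Longrightarrow> admissible \<epsilon> L (\<lambda>i. a i + t * b i)"
  unfolding admissible_def parity_def by (auto simp: dot_add_left dot_scale_left algebra_simps)

lemma admissible_cong:
  assumes "admissible \<epsilon> L z" "\<And>i. i < N \<Longrightarrow> z' i = z i" shows "admissible \<epsilon> L z'"
proof -
  have "dot N z' (fst p) = dot N z (fst p)" for p by (rule dot_cong) (use assms in auto)
  thus ?thesis using assms involution_less unfolding admissible_def parity_def by auto
qed

lemma admissible_mat_app:
  assumes "admissible \<epsilon> L z" "\<forall>p\<in>set L. is_eigenpair p"
  shows "admissible \<epsilon> L (mat_app N T z)"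
proof -
  have "dot N (mat_app N T z) (fst p) = 0" if p: "p \<in> set L" for p
  proof -
    have "dot N (mat_app N T z) (fst p) = dot N z (\<lambda>i. snd p * fst p i)"
      unfolding dot_mat_app_swap
      by (rule dot_cong) (use assms(2) p in \<open>auto simp: is_eigenpair_def\<close>)
    thus ?thesis using assms(1) p by (simp add: dot_scale_right admissible_def)
  qed
  thus ?thesis using assms(1) parity_mat_app unfolding admissible_def by blast
qed

lemma admissible_unit_qform_max:
  assumes x: "admissible \<epsilon> L x" "dot N x x \<noteq> 0"
  shows "\<exists>u. admissible \<epsilon> L u \<and> dot N u u = 1 \<and>
    (\<forall>z. admissible \<epsilon> L z \<longrightarrow> dot N z z = 1 \<longrightarrow> qform z \<le> qform u)"
proof -
  let ?Q = "PiE {..<N} (\<lambda>_. {-1..1::real})"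
  define g where "g z = (\<Sum>i<N. (z (\<sigma> i) - \<epsilon> * z i)\<^sup>2) + (\<Sum>p\<in>set L. (dot N z (fst p))\<^sup>2)
      + (dot N z z - 1)\<^sup>2" for z
  have g0: "g z = 0 \<longleftrightarrow> admissible \<epsilon> L z \<and> dot N z z = 1" for z
  proof -
    have "0 \<le> (\<Sum>i<N. (z (\<sigma> i) - \<epsilon> * z i)\<^sup>2)" "0 \<le> (\<Sum>p\<in>set L. (dot N z (fst p))\<^sup>2)"
      "0 \<le> (dot N z z - 1)\<^sup>2" by (auto intro: sum_nonneg)
    hence "g z = 0 \<longleftrightarrow> (\<Sum>i<N. (z (\<sigma> i) - \<epsilon> * z i)\<^sup>2) = 0 \<and>
        (\<Sum>p\<in>set L. (dot N z (fst p))\<^sup>2) = 0 \<and> (dot N z z - 1)\<^sup>2 = 0"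
      unfolding g_def by linarith
    thus ?thesis by (auto simp: sum_nonneg_eq_0_iff admissible_def parity_def)
  qed
  have g_restrict: "g (restrict z {..<N}) = 0" if "admissible \<epsilon> L z" "dot N z z = 1" for z
  proof -
    have "admissible \<epsilon> L (restrict z {..<N})" by (rule admissible_cong[OF that(1)]) simp
    moreover have "dot N (restrict z {..<N}) (restrict z {..<N}) = dot N z z"
      by (rule dot_cong) simp_all
    ultimately show ?thesis using that(2) g0 by simp
  qed
  have proj: "continuous_map (powertop_real {..<N}) euclideanreal (\<lambda>z. z i)" if "i < N" for i
    using continuous_map_product_projection[of i "{..<N}" "\<lambda>_. euclideanreal"] that by simp
  have "continuous_map (powertop_real {..<N}) euclideanreal (\<lambda>z. dot N z w)" for w
    unfolding dot_def by (intro continuous_intros proj) auto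
  moreover have "continuous_map (powertop_real {..<N}) euclideanreal (\<lambda>z. dot N z z)"
    unfolding dot_def by (intro continuous_intros proj) auto
  ultimately have "continuous_map (powertop_real {..<N}) euclideanreal g"
    unfolding g_def by (intro continuous_intros proj involution_less) auto
  moreover have "continuous_map (powertop_real {..<N}) euclideanreal qform"
    unfolding qform_def dot_def mat_app_def by (intro continuous_intros proj) auto
  moreover obtain u0 where "u0 \<in> ?Q" "g u0 = 0"
  proof
    define c where "c = 1 / sqrt (dot N x x)"
    have "dot N (\<lambda>i. c * x i) (\<lambda>i. c * x i) = c\<^sup>2 * dot N x x"
      unfolding dot_scale_left dot_scale_right by (simp add: power2_eq_square)
    hence unit: "dot N (\<lambda>i. c * x i) (\<lambda>i. c * x i) = 1"
      using x(2) dot_self_nonneg[of N x] by (simp add: c_def power_divide)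
    have "admissible \<epsilon> L (\<lambda>i. c * x i)"
      using x(1) by (simp add: admissible_def parity_def dot_scale_left)
    thus "g (restrict (\<lambda>i. c * x i) {..<N}) = 0" using unit by (rule g_restrict)
    show "restrict (\<lambda>i. c * x i) {..<N} \<in> ?Q" using unit by (rule unit_restrict_in_cube)
  qed
  ultimately obtain u where u: "g u = 0"
    and umax: "\<And>y. y \<in> ?Q \<Longrightarrow> g y = 0 \<Longrightarrow> qform y \<le> qform u"
    by (metis continuous_attains_max_on_cube_level_set)
  have "qform z \<le> qform u" if "admissible \<epsilon> L z" "dot N z z = 1" for z
  proof -
    have "qform z = qform (restrict z {..<N})" by (rule qform_cong) simp
    also have "\<dots> \<le> qform u"
      using umax[OF unit_restrict_in_cube[OF that(2)] g_restrict[OF that]] .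
    finally show ?thesis .
  qed
  thus ?thesis using u g0 by blast
qed

lemma admissible_eigenvector_exists:
  assumes x: "admissible \<epsilon> L x" "dot N x x \<noteq> 0" and L: "\<forall>p\<in>set L. is_eigenpair p"
  shows "\<exists>u \<mu>. admissible \<epsilon> L u \<and> dot N u u = 1 \<and> is_eigenpair (u, \<mu>)"
proof -
  obtain u where u: "admissible \<epsilon> L u" "dot N u u = 1"
    and umax: "\<And>z. admissible \<epsilon> L z \<Longrightarrow> dot N z z = 1 \<Longrightarrow> qform z \<le> qform u"
    using admissible_unit_qform_max[OF x] by blast
  have "qform z \<le> qform u * dot N z z" if z: "admissible \<epsilon> L z" for z
  proof (cases "dot N z z = 0")
    case True
    have "qform z = qform (\<lambda>i. 0 * z i)" by (rule qform_cong) (use dot_self_eq_0[OF True] in auto)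
    thus ?thesis using True qform_scale[of 0 z] by simp
  next
    case False
    define c where "c = 1 / sqrt (dot N z z)"
    have pos: "dot N z z > 0" using False dot_self_nonneg[of N z] by linarith
    hence "c\<^sup>2 * dot N z z = 1" by (simp add: c_def power_divide)
    moreover have "admissible \<epsilon> L (\<lambda>i. c * z i)"
      using z by (simp add: admissible_def parity_def dot_scale_left)
    ultimately have "c\<^sup>2 * qform z \<le> qform u"
      using umax[of "\<lambda>i. c * z i"] by (simp add: qform_scale dot_scale_left dot_scale_right power2_eq_square)
    thus ?thesis using pos by (simp add: c_def power_divide divide_le_eq mult.commute)
  qed
  hence "\<forall>i<N. mat_app N T u i = qform u * u i"
    by (intro rayleigh_maximizer_is_eigenvector[where S = "admissible \<epsilon> L"])
       (use u admissible_lincomb admissible_mat_app[OF _ L] in auto)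
  thus ?thesis using u by (auto simp: is_eigenpair_def)
qed

definition orthonormal_eigenlist :: "real \<Rightarrow> ((nat \<Rightarrow> real) \<times> real) list \<Rightarrow> bool" where
  "orthonormal_eigenlist \<epsilon> L \<longleftrightarrow>
     (\<forall>k<length L. \<forall>l<length L. dot N (fst (L!k)) (fst (L!l)) = (if k = l then 1 else 0)) \<and>
     (\<forall>p\<in>set L. parity \<epsilon> (fst p) \<and> is_eigenpair p)"

definition complete_eigenlist :: "real \<Rightarrow> ((nat \<Rightarrow> real) \<times> real) list \<Rightarrow> bool" where
  "complete_eigenlist \<epsilon> L \<longleftrightarrow> orthonormal_eigenlist \<epsilon> L \<and> (\<forall>x. admissible \<epsilon> L x \<longrightarrow> dot N x x = 0)"

lemma orthonormal_eigenlist_snoc: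
  assumes L: "orthonormal_eigenlist \<epsilon> L" and u: "admissible \<epsilon> L u" "dot N u u = 1" "is_eigenpair (u, \<mu>)"
  shows "orthonormal_eigenlist \<epsilon> (L @ [(u, \<mu>)])"
proof -
  have "dot N u (fst (L!c)) = 0" "dot N (fst (L!c)) u = 0" if "c < length L" for c
    using u(1) that nth_mem[OF that] dot_commute[of N u] by (auto simp: admissible_def)
  thus ?thesis using L u unfolding orthonormal_eigenlist_def admissible_def
    by (auto simp: nth_append less_Suc_eq)
qed

text \<open>Greedy extension terminates because an orthonormal family has at most \<open>N\<close> members.\<close>
lemma complete_eigenlist_exists: "\<exists>L. complete_eigenlist \<epsilon> L"
proof (rule ccontr)
  assume incomplete: "\<nexists>L. complete_eigenlist \<epsilon> L"
  have "\<exists>L. orthonormal_eigenlist \<epsilon> L \<and> length L = k" for k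
  proof (induction k)
    case 0
    show ?case by (rule exI[of _ "[]"]) (simp add: orthonormal_eigenlist_def)
  next
    case (Suc k)
    then obtain L where L: "orthonormal_eigenlist \<epsilon> L" "length L = k" by blast
    then obtain x where "admissible \<epsilon> L x" "dot N x x \<noteq> 0"
      using incomplete by (auto simp: complete_eigenlist_def)
    moreover have "\<forall>p\<in>set L. is_eigenpair p" using L(1) by (simp add: orthonormal_eigenlist_def)
    ultimately obtain u \<mu> where "admissible \<epsilon> L u" "dot N u u = 1" "is_eigenpair (u, \<mu>)"
      using admissible_eigenvector_exists by blast
    from orthonormal_eigenlist_snoc[OF L(1) this] show ?case using L(2) by fastforce
  qed
  then obtain L where L: "orthonormal_eigenlist \<epsilon> L" "length L = Suc N" by blast
  have "length L \<le> N"
    by (rule orthonormal_family_length_le[of _ N "\<lambda>k. fst (L!k)"])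
       (use L(1) in \<open>auto simp: orthonormal_eigenlist_def\<close>)
  with L(2) show False by simp
qed

context
  fixes Ls Lk :: "((nat \<Rightarrow> real) \<times> real) list"
  assumes Ls: "complete_eigenlist 1 Ls" and Lk: "complete_eigenlist (-1) Lk"
begin

abbreviation basis :: "nat \<Rightarrow> nat \<Rightarrow> real" where
  "basis k \<equiv> fst ((Ls @ Lk) ! k)"

lemma basis_parity_pos: "k < length Ls \<Longrightarrow> parity 1 (basis k)"
  using Ls nth_mem[of k Ls]
  by (auto simp: nth_append complete_eigenlist_def orthonormal_eigenlist_def)

lemma basis_parity_neg: "length Ls \<le> k \<Longrightarrow> k < length Ls + length Lk \<Longrightarrow> parity (-1) (basis k)"
  using Lk nth_mem[of "k - length Ls" Lk]
  by (auto simp: nth_append complete_eigenlist_def orthonormal_eigenlist_def)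

lemma basis_eigenpair: "k < length Ls + length Lk \<Longrightarrow> is_eigenpair ((Ls @ Lk) ! k)"
  using Ls Lk nth_mem[of k Ls] nth_mem[of "k - length Ls" Lk]
  by (cases "k < length Ls") (auto simp: nth_append complete_eigenlist_def orthonormal_eigenlist_def)

lemma basis_orthonormal:
  assumes k: "k < length Ls + length Lk" and l: "l < length Ls + length Lk"
  shows "dot N (basis k) (basis l) = (if k = l then 1 else 0)"
proof (cases "k < length Ls"; cases "l < length Ls")
  assume "k < length Ls" "l < length Ls"
  thus ?thesis using Ls by (simp add: complete_eigenlist_def orthonormal_eigenlist_def nth_append)
next
  assume "\<not> k < length Ls" "\<not> l < length Ls"
  thus ?thesis using Lk k l by (auto simp: complete_eigenlist_def orthonormal_eigenlist_def nth_append)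
next
  assume "k < length Ls" "\<not> l < length Ls"
  thus ?thesis using dot_parity_opposite basis_parity_pos basis_parity_neg l by auto
next
  assume "\<not> k < length Ls" "l < length Ls"
  thus ?thesis using dot_parity_opposite basis_parity_pos basis_parity_neg k dot_commute
    by (metis not_less)
qed

text \<open>Completeness of each list only speaks about vectors of one parity; a general vector
  is split into its even part \<open>(r + r \<circ> \<sigma>)/2\<close> and odd part \<open>(r - r \<circ> \<sigma>)/2\<close>.\<close>
lemma orthogonal_to_basis_eq_0:
  assumes orth: "\<And>l. l < length Ls + length Lk \<Longrightarrow> dot N r (basis l) = 0" and i: "i < N"
  shows "r i = 0"
proof -
  define P where "P j = (1/2) * r j + (1/2) * r (\<sigma> j)" for j
  define M where "M j = (1/2) * r j + (-1/2) * r (\<sigma> j)" for j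
  have "admissible 1 Ls P"
    unfolding admissible_def
  proof (intro conjI ballI)
    show "parity 1 P" unfolding parity_def P_def using involution by auto
    fix q assume "q \<in> set Ls"
    then obtain l where l: "l < length Ls" "q = (Ls @ Lk) ! l" by (auto simp: in_set_conv_nth nth_append)
    show "dot N P (fst q) = 0"
      unfolding P_def dot_add_left dot_scale_left l(2)
      using dot_involution_parity[OF basis_parity_pos[OF l(1)]] orth[of l] l(1) by simp
  qed
  moreover have "admissible (-1) Lk M"
    unfolding admissible_def
  proof (intro conjI ballI)
    show "parity (-1) M" unfolding parity_def M_def using involution by auto
    fix q assume "q \<in> set Lk"
    then obtain l where l: "l < length Lk" "q = (Ls @ Lk) ! (length Ls + l)"
      by (auto simp: in_set_conv_nth nth_append)
    show "dot N M (fst q) = 0"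
      unfolding M_def dot_add_left dot_scale_left l(2)
      using dot_involution_parity[OF basis_parity_neg, of "length Ls + l"] orth[of "length Ls + l"] l(1)
      by simp
  qed
  ultimately have "P i = 0" "M i = 0"
    using Ls Lk dot_self_eq_0 i by (auto simp: complete_eigenlist_def)
  thus ?thesis unfolding P_def M_def by simp
qed

lemma basis_expansion:
  assumes "i < N" shows "v i = (\<Sum>k<length Ls + length Lk. dot N v (basis k) * basis k i)"
proof -
  define r where "r j = v j - (\<Sum>k<length Ls + length Lk. dot N v (basis k) * basis k j)" for j
  have "dot N r (basis l) = 0" if l: "l < length Ls + length Lk" for l
  proof -
    have "(\<Sum>k<length Ls + length Lk. dot N v (basis k) * dot N (basis k) (basis l))
        = (\<Sum>k<length Ls + length Lk. (if k = l then 1 else 0) * dot N v (basis k))"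
      by (intro sum.cong refl) (use basis_orthonormal[OF _ l] in auto)
    also have "\<dots> = dot N v (basis l)" using l by (rule sum_delta_mult)
    finally show ?thesis unfolding r_def dot_diff_left dot_sum_left by simp
  qed
  from orthogonal_to_basis_eq_0[OF this assms] show ?thesis by (simp add: r_def)
qed

lemma basis_unit_coordinates:
  assumes "i < N" "j < N"
  shows "(\<Sum>k<length Ls + length Lk. basis k i * basis k j) = (if i = j then 1 else 0)"
  using basis_expansion[OF assms(2), of "\<lambda>l. if l = i then 1 else 0"] dot_unit_left[OF assms(1)]
  by (simp add: eq_commute)

lemma basis_length: "length Ls + length Lk = N"
proof -
  have "real (length Ls + length Lk) = (\<Sum>k<length Ls + length Lk. dot N (basis k) (basis k))"
    by (simp add: basis_orthonormal)
  also have "\<dots> = (\<Sum>i<N. \<Sum>k<length Ls + length Lk. basis k i * basis k i)"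
    unfolding dot_def by (rule sum.swap)
  also have "\<dots> = real N" by (simp add: basis_unit_coordinates)
  finally show ?thesis by simp
qed

text \<open>Both sides are the trace of the permutation \<open>\<sigma>\<close>, computed in the eigenbasis and in the
  standard basis.\<close>
lemma basis_parity_count: "real (length Ls) - real (length Lk) = real (card {i. i < N \<and> \<sigma> i = i})"
proof -
  let ?m = "length Ls + length Lk"
  have "(\<Sum>k<?m. dot N (\<lambda>i. basis k (\<sigma> i)) (basis k)) = (\<Sum>k<?m. if k < length Ls then 1 else -1)"
  proof (rule sum.cong[OF refl])
    fix k assume "k \<in> {..<?m}"
    hence k: "k < ?m" by simp
    show "dot N (\<lambda>i. basis k (\<sigma> i)) (basis k) = (if k < length Ls then 1 else -1)"
    proof (cases "k < length Ls")
      case True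
      thus ?thesis using dot_involution_parity[OF basis_parity_pos[OF True]] basis_orthonormal[OF k k] by simp
    next
      case False
      thus ?thesis using dot_involution_parity[OF basis_parity_neg[of k]] basis_orthonormal[OF k k] k by simp
    qed
  qed
  also have "\<dots> = real (length Ls) - real (length Lk)"
    by (simp add: sum_lessThan_add)
  moreover have "(\<Sum>k<?m. dot N (\<lambda>i. basis k (\<sigma> i)) (basis k))
      = (\<Sum>i<N. \<Sum>k<?m. basis k (\<sigma> i) * basis k i)"
    unfolding dot_def by (rule sum.swap)
  moreover have "\<dots> = (\<Sum>i<N. if \<sigma> i = i then 1 else 0)"
    by (rule sum.cong) (auto simp: basis_unit_coordinates involution_less)
  moreover have "\<dots> = real (card {i. i < N \<and> \<sigma> i = i})"
    by (simp add: sum.If_cases Int_def conj_commute)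
  ultimately show ?thesis by simp
qed

lemma kernel_expansion:
  assumes i: "i < N" and j: "j < N"
  shows "T i j = (\<Sum>k<length Ls + length Lk. snd ((Ls @ Lk) ! k) * basis k i * basis k j)"
proof -
  have "T i j = mat_app N T (\<lambda>l. if l = j then 1 else 0) i"
    unfolding mat_app_def using sum_delta_mult[OF j, of "T i"] by (simp add: mult.commute)
  also have "\<dots> = mat_app N T (\<lambda>l. \<Sum>k<length Ls + length Lk. basis k j * basis k l) i"
    by (rule arg_cong[where f = "\<lambda>x. x i"], rule mat_app_cong)
      (simp add: basis_unit_coordinates j eq_commute mult.commute)
  also have "\<dots> = (\<Sum>k<length Ls + length Lk. basis k j * mat_app N T (basis k) i)"
    by (rule mat_app_sum)
  also have "\<dots> = (\<Sum>k<length Ls + length Lk. snd ((Ls @ Lk) ! k) * basis k i * basis k j)"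
    by (rule sum.cong) (use basis_eigenpair i in \<open>auto simp: is_eigenpair_def\<close>)
  finally show ?thesis .
qed

end

theorem parity_eigenbasis_exists:
  obtains p q :: nat and w :: "nat \<Rightarrow> nat \<Rightarrow> real" and \<mu> :: "nat \<Rightarrow> real" where
    "p + q = N" "real p - real q = real (card {i. i < N \<and> \<sigma> i = i})"
    "\<And>k. k < p \<Longrightarrow> parity 1 (w k)" "\<And>k. p \<le> k \<Longrightarrow> k < N \<Longrightarrow> parity (-1) (w k)"
    "\<And>k l. k < N \<Longrightarrow> l < N \<Longrightarrow> dot N (w k) (w l) = (if k = l then 1 else 0)"
    "\<And>v i. i < N \<Longrightarrow> v i = (\<Sum>k<N. dot N v (w k) * w k i)"
    "\<And>i j. i < N \<Longrightarrow> j < N \<Longrightarrow> T i j = (\<Sum>k<N. \<mu> k * w k i * w k j)"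
proof -
  obtain Ls Lk where L: "complete_eigenlist 1 Ls" "complete_eigenlist (-1) Lk"
    using complete_eigenlist_exists by metis
  note len = basis_length[OF L]
  show thesis
    by (rule that[of "length Ls" "length Lk" "\<lambda>k. fst ((Ls @ Lk) ! k)" "\<lambda>k. snd ((Ls @ Lk) ! k)"])
      (use len basis_parity_count[OF L] basis_parity_pos[OF L] basis_parity_neg[OF L]
         basis_orthonormal[OF L] basis_expansion[OF L] kernel_expansion[OF L] in \<open>simp_all\<close>)
qed

end

lemma orthonormal_basis_family_vec:
  assumes orthonormal: "\<And>k l. k < N \<Longrightarrow> l < N \<Longrightarrow> dot N (w k) (w l) = (if k = l then 1 else 0)"
    and expansion: "\<And>v i. i < N \<Longrightarrow> v i = (\<Sum>k<N. dot N v (w k) * w k i)"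
  shows "orthonormal_basis_family N (\<lambda>k. vec N (w k))"
proof -
  have "vec N (w k) \<bullet> vec N (w l) = dot N (w k) (w l)" for k l
    by (simp add: scalar_prod_def dot_def atLeast0LessThan)
  moreover have "\<exists>c. \<forall>r<N. v $ r = (\<Sum>k<N. c k * vec N (w k) $ r)" for v :: "real vec"
    using expansion[of _ "\<lambda>i. v $ i"] by (intro exI[of _ "\<lambda>k. dot N (\<lambda>i. v $ i) (w k)"]) simp
  ultimately show ?thesis using orthonormal unfolding orthonormal_basis_family_def by simp
qed

definition shuffle :: "nat \<Rightarrow> nat \<Rightarrow> nat" where
  "shuffle n i = (i mod n) * n + i div n"

lemma index_pair_less: "a < n \<Longrightarrow> b < (n::nat) \<Longrightarrow> a + b * n < n^2"
proof -
  assume "a < n" "b < n"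
  hence "a + b * n < (b + 1) * n" by simp
  also have "\<dots> \<le> n * n" using \<open>b < n\<close> by (intro mult_right_mono) auto
  finally show ?thesis by (simp add: power2_eq_square)
qed

lemma index_mod_div_less: "i < (n::nat)^2 \<Longrightarrow> i mod n < n \<and> i div n < n"
  by (cases "n = 0") (auto simp: power2_eq_square less_mult_imp_div_less)

lemma shuffle_index_pair: "a < n \<Longrightarrow> shuffle n (a + b * n) = b + a * n"
  by (simp add: shuffle_def)

lemma
  assumes "i < n^2"
  shows shuffle_mod: "shuffle n i mod n = i div n" and shuffle_div: "shuffle n i div n = i mod n"
    and shuffle_less: "shuffle n i < n^2" and shuffle_shuffle: "shuffle n (shuffle n i) = i"
proof -
  have i: "i mod n < n" "i div n < n" using index_mod_div_less[OF assms] by auto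
  show "shuffle n i mod n = i div n" "shuffle n i div n = i mod n"
    using i by (simp_all add: shuffle_def)
  show "shuffle n i < n^2" unfolding shuffle_def by (metis i add.commute index_pair_less)
  show "shuffle n (shuffle n i) = i" using i by (simp add: shuffle_def)
qed

lemma PS_perm_carrier: "PS_perm n \<in> carrier_mat (n^2) (n^2)"
  by (simp add: PS_perm_def)

lemma PS_perm_conj_entry:
  assumes M: "M \<in> carrier_mat (n^2) (n^2)" and r: "r < n^2" and c: "c < n^2"
  shows "(PS_perm n * M * PS_perm n) $$ (r, c) = M $$ (shuffle n r, shuffle n c)"
proof -
  note P = PS_perm_carrier[of n]
  have mult_entry: "(X * Y) $$ (i, j) = (\<Sum>k<n^2. X $$ (i, k) * Y $$ (k, j))"
    if "X \<in> carrier_mat (n^2) (n^2)" "Y \<in> carrier_mat (n^2) (n^2)" "i < n^2" "j < n^2" for X Y i j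
    using that by (simp add: scalar_prod_def atLeast0LessThan)
  have P_entry: "PS_perm n $$ (a, b) = (if a = shuffle n b then 1 else 0)" if "a < n^2" "b < n^2" for a b
    using that by (simp add: PS_perm_def shuffle_def)
  have row: "(PS_perm n * M) $$ (r, k) = M $$ (shuffle n r, k)" if k: "k < n^2" for k
  proof -
    have "(PS_perm n * M) $$ (r, k) = (\<Sum>l<n^2. (if l = shuffle n r then 1 else 0) * M $$ (l, k))"
      unfolding mult_entry[OF P M r k]
      by (intro sum.cong refl) (use r in \<open>auto simp: P_entry shuffle_shuffle shuffle_less\<close>)
    thus ?thesis using sum_delta_mult[OF shuffle_less[OF r]] by simp
  qed
  have "(PS_perm n * M * PS_perm n) $$ (r, c)
      = (\<Sum>k<n^2. (if k = shuffle n c then 1 else 0) * M $$ (shuffle n r, k))"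
    unfolding mult_entry[OF mult_carrier_mat[OF P M] P r c]
    by (intro sum.cong refl) (use c in \<open>auto simp: P_entry row\<close>)
  thus ?thesis using sum_delta_mult[OF shuffle_less[OF c]] by simp
qed

lemma PS_symmetric_iff:
  "PS_symmetric n M \<longleftrightarrow> M \<in> carrier_mat (n^2) (n^2) \<and>
     (\<forall>r<n^2. \<forall>c<n^2. M $$ (c, r) = M $$ (r, c) \<and> M $$ (shuffle n r, shuffle n c) = M $$ (r, c))"
proof -
  have "M = M\<^sup>T \<longleftrightarrow> (\<forall>r<n^2. \<forall>c<n^2. M $$ (c, r) = M $$ (r, c))"
    and "M = PS_perm n * M * PS_perm n \<longleftrightarrow>
      (\<forall>r<n^2. \<forall>c<n^2. M $$ (shuffle n r, shuffle n c) = M $$ (r, c))"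
    if M: "M \<in> carrier_mat (n^2) (n^2)"
    using M carrier_matD[OF PS_perm_carrier[of n]]
    by (auto simp: mat_eq_iff PS_perm_conj_entry[OF M] simp del: index_mult_mat(1))
  thus ?thesis unfolding PS_symmetric_def by blast
qed

lemma tilde_entry:
  "r < n^2 \<Longrightarrow> c < n^2 \<Longrightarrow> tilde n A $$ (r, c) = A $$ (c mod n + (r mod n) * n, c div n + (r div n) * n)"
  by (simp add: tilde_def)

lemma tilde_entry_inverse:
  assumes "r < n^2" "c < n^2"
  shows "tilde n A $$ (r div n + (c div n) * n, r mod n + (c mod n) * n) = A $$ (r, c)"
proof -
  have "r mod n < n" "r div n < n" "c mod n < n" "c div n < n"
    using index_mod_div_less assms by auto
  thus ?thesis by (simp add: tilde_entry index_pair_less)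
qed

lemma tilde_PS_symmetric:
  assumes "PS_symmetric n A" shows "PS_symmetric n (tilde n A)"
  unfolding PS_symmetric_iff
proof (intro conjI allI impI)
  show "tilde n A \<in> carrier_mat (n^2) (n^2)" by (simp add: tilde_def)
  fix r c assume r: "r < n^2" and c: "c < n^2"
  have idx: "r mod n < n" "r div n < n" "c mod n < n" "c div n < n"
    using index_mod_div_less r c by auto
  have A_sym: "A $$ (j, i) = A $$ (i, j)" and A_shuffle: "A $$ (shuffle n i, shuffle n j) = A $$ (i, j)"
    if "i < n^2" "j < n^2" for i j
    using assms that by (auto simp: PS_symmetric_iff)
  show "tilde n A $$ (c, r) = tilde n A $$ (r, c)"
    using A_shuffle[of "c mod n + (r mod n) * n" "c div n + (r div n) * n"] idx
    by (simp add: tilde_entry r c index_pair_less shuffle_index_pair add.commute)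
  show "tilde n A $$ (shuffle n r, shuffle n c) = tilde n A $$ (r, c)"
    using A_sym[of "c mod n + (r mod n) * n" "c div n + (r div n) * n"] idx
    by (simp add: tilde_entry r c index_pair_less shuffle_less shuffle_mod shuffle_div)
qed

lemma card_shuffle_fixed_points: "card {i. i < n^2 \<and> shuffle n i = i} = n"
proof -
  have "{i. i < n^2 \<and> shuffle n i = i} = (\<lambda>a. a + a * n) ` {..<n}"
  proof (intro equalityI subsetI)
    fix i assume "i \<in> {i. i < n^2 \<and> shuffle n i = i}"
    hence i: "i < n^2" "shuffle n i = i" by auto
    hence "i mod n = i div n" using shuffle_mod[OF i(1)] by simp
    hence "i = i mod n + i mod n * n" using div_mult_mod_eq[of i n] by (simp add: add.commute)
    thus "i \<in> (\<lambda>a. a + a * n) ` {..<n}" using index_mod_div_less[OF i(1)] by blast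
  qed (auto simp: index_pair_less shuffle_index_pair)
  moreover have "inj_on (\<lambda>a. a + a * n) {..<n}"
  proof (rule inj_onI)
    fix a b assume "a \<in> {..<n}" "b \<in> {..<n}" "a + a * n = b + b * n"
    hence "(a + a * n) mod n = (b + b * n) mod n" "a < n" "b < n" by simp_all
    thus "a = b" by simp
  qed
  ultimately show ?thesis by (simp add: card_image)
qed

definition unvec :: "nat \<Rightarrow> (nat \<Rightarrow> real) \<Rightarrow> real mat" where
  "unvec n f = mat n n (\<lambda>(a, b). f (a + b * n))"

lemma unvec_carrier: "unvec n f \<in> carrier_mat n n"
  by (simp add: unvec_def)

lemma vec_of_mat_unvec: "vec_of_mat (unvec n f) = vec (n^2) f"
proof (rule eq_vecI)
  fix i assume "i < dim_vec (vec (n^2) f)"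
  thus "vec_of_mat (unvec n f) $ i = vec (n^2) f $ i"
    using index_mod_div_less[of i n] by (simp add: vec_of_mat_def unvec_def power2_eq_square)
qed (simp add: vec_of_mat_def unvec_def power2_eq_square)

lemma kron_unvec_entry:
  assumes "r < n^2" "c < n^2"
  shows "kron (unvec n f) (unvec n g) $$ (r, c) =
    f (r div n + (c div n) * n) * g (r mod n + (c mod n) * n)"
  using assms index_mod_div_less[of r n] index_mod_div_less[of c n]
  by (simp add: kron_def unvec_def power2_eq_square)

lemma unvec_symmetric:
  assumes "\<And>i. i < n^2 \<Longrightarrow> f (shuffle n i) = f i" shows "(unvec n f)\<^sup>T = unvec n f"
proof (rule eq_matI)
  fix a b assume "a < dim_row (unvec n f)" "b < dim_col (unvec n f)"
  hence ab: "a < n" "b < n" by (auto simp: unvec_def)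
  show "(unvec n f)\<^sup>T $$ (a, b) = unvec n f $$ (a, b)"
    using assms[of "a + b * n"] ab by (simp add: unvec_def index_pair_less shuffle_index_pair)
qed (simp_all add: unvec_def)

lemma unvec_skew:
  assumes "\<And>i. i < n^2 \<Longrightarrow> f (shuffle n i) = - f i" shows "(unvec n f)\<^sup>T = - unvec n f"
proof (rule eq_matI)
  fix a b assume "a < dim_row (- unvec n f)" "b < dim_col (- unvec n f)"
  hence ab: "a < n" "b < n" by (auto simp: unvec_def)
  show "(unvec n f)\<^sup>T $$ (a, b) = (- unvec n f) $$ (a, b)"
    using assms[of "a + b * n"] ab by (simp add: unvec_def index_pair_less shuffle_index_pair)
qed (simp_all add: unvec_def)

lemma kron_unvec_expansion:
  assumes A: "A \<in> carrier_mat (n^2) (n^2)"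
    and tilde_A: "\<And>i j. i < n^2 \<Longrightarrow> j < n^2 \<Longrightarrow> tilde n A $$ (i, j) = (\<Sum>k<m. \<mu> k * w k i * w k j)"
  shows "A = mat (n^2) (n^2) (\<lambda>(r, c). \<Sum>k<m. \<mu> k * kron (unvec n (w k)) (unvec n (w k)) $$ (r, c))"
    (is "A = ?M")
proof (rule eq_matI)
  fix r c assume "r < dim_row ?M" "c < dim_col ?M"
  hence r: "r < n^2" and c: "c < n^2" by simp_all
  have "r mod n < n" "r div n < n" "c mod n < n" "c div n < n"
    using index_mod_div_less r c by auto
  hence "A $$ (r, c) = (\<Sum>k<m. \<mu> k * w k (r div n + (c div n) * n) * w k (r mod n + (c mod n) * n))"
    using tilde_A[of "r div n + (c div n) * n" "r mod n + (c mod n) * n"] tilde_entry_inverse[OF r c]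
    by (simp add: index_pair_less)
  thus "A $$ (r, c) = ?M $$ (r, c)" using r c by (simp add: kron_unvec_entry mult.assoc)
qed (use A in auto)

theorem mainTheorem10:
  fixes n :: nat and A :: "real mat"
  assumes "PS_symmetric n A"
  shows "PS_symmetric n (tilde n A) \<and>
    (\<exists>(lsym :: nat \<Rightarrow> real) (Bsym :: nat \<Rightarrow> real mat) (lskew :: nat \<Rightarrow> real) (Bskew :: nat \<Rightarrow> real mat).
       (\<forall>i < n * (n + 1) div 2. Bsym i \<in> carrier_mat n n \<and> (Bsym i)\<^sup>T = Bsym i) \<and>
       (\<forall>i < n * (n - 1) div 2. Bskew i \<in> carrier_mat n n \<and> (Bskew i)\<^sup>T = - Bskew i) \<and>
       orthonormal_basis_family (n^2)
         (\<lambda>k. if k < n * (n + 1) div 2 then vec_of_mat (Bsym k)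
              else vec_of_mat (Bskew (k - n * (n + 1) div 2))) \<and>
       A = mat (n^2) (n^2) (\<lambda>(r, c).
             (\<Sum>i < n * (n + 1) div 2. lsym i * kron (Bsym i) (Bsym i) $$ (r, c)) +
             (\<Sum>i < n * (n - 1) div 2. lskew i * kron (Bskew i) (Bskew i) $$ (r, c))))"
proof -
  have tilde_A: "PS_symmetric n (tilde n A)" using assms by (rule tilde_PS_symmetric)
  then interpret involution_kernel "n^2" "\<lambda>i j. tilde n A $$ (i, j)" "shuffle n"
    by unfold_locales (auto simp: PS_symmetric_iff shuffle_less shuffle_shuffle)
  obtain p q w \<mu> where pq: "p + q = n^2" "real p - real q = real (card {i. i < n^2 \<and> shuffle n i = i})"
    and even: "\<And>k. k < p \<Longrightarrow> parity 1 (w k)" and odd: "\<And>k. p \<le> k \<Longrightarrow> k < n^2 \<Longrightarrow> parity (-1) (w k)"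
    and orthonormal: "\<And>k l. k < n^2 \<Longrightarrow> l < n^2 \<Longrightarrow> dot (n^2) (w k) (w l) = (if k = l then 1 else 0)"
    and expansion: "\<And>v i. i < n^2 \<Longrightarrow> v i = (\<Sum>k<n^2. dot (n^2) v (w k) * w k i)"
    and kernel: "\<And>i j. i < n^2 \<Longrightarrow> j < n^2 \<Longrightarrow> tilde n A $$ (i, j) = (\<Sum>k<n^2. \<mu> k * w k i * w k j)"
    using parity_eigenbasis_exists by blast
  have "n * (n + 1) = 2 * p" "n * (n - 1) = 2 * q"
    using pq card_shuffle_fixed_points[of n] by (simp_all add: power2_eq_square algebra_simps diff_mult_distrib2)
  hence dims: "n * (n + 1) div 2 = p" "n * (n - 1) div 2 = q" by simp_all
  define Bsym where "Bsym k = unvec n (w k)" for k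
  define Bskew where "Bskew k = unvec n (w (p + k))" for k
  have sym: "\<forall>k<p. Bsym k \<in> carrier_mat n n \<and> (Bsym k)\<^sup>T = Bsym k"
    using even by (auto simp: Bsym_def unvec_carrier parity_def intro!: unvec_symmetric)
  have skew: "\<forall>k<q. Bskew k \<in> carrier_mat n n \<and> (Bskew k)\<^sup>T = - Bskew k"
    using odd pq(1) by (auto simp: Bskew_def unvec_carrier parity_def intro!: unvec_skew)
  have basis: "orthonormal_basis_family (n^2)
      (\<lambda>k. if k < p then vec_of_mat (Bsym k) else vec_of_mat (Bskew (k - p)))"
    using orthonormal_basis_family_vec[OF orthonormal expansion]
    by (simp add: Bsym_def Bskew_def vec_of_mat_unvec cong: if_cong)
  have decomposition: "A = mat (n^2) (n^2) (\<lambda>(r, c).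
      (\<Sum>k<p. \<mu> k * kron (Bsym k) (Bsym k) $$ (r, c)) +
      (\<Sum>k<q. \<mu> (p + k) * kron (Bskew k) (Bskew k) $$ (r, c)))"
    using kron_unvec_expansion[OF _ kernel] assms
    by (simp add: PS_symmetric_def flip: pq(1)) (simp add: sum_lessThan_add Bsym_def Bskew_def)
  show ?thesis
    unfolding dims
    by (rule conjI[OF tilde_A], rule exI[of _ \<mu>], rule exI[of _ Bsym],
        rule exI[of _ "\<lambda>k. \<mu> (p + k)"], rule exI[of _ Bskew])
      (intro conjI sym skew basis decomposition)
qed

end
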